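(* Let $\mathbf{P}=(p_{i,j})_{i,j=0}^{d}$ be the transition matrix of an ergodic discrete-time Markov chain on $\{0,\dots,d\}$ with stationary distribution $\boldsymbol{\pi}$, let $Y_1,\dots,Y_{W+1}$ be the chain started with $Y_1\sim\boldsymbol{\pi}$, and let $N_{i,j}=\sum_{t=1}^{W}\mathbf{1}_{\{Y_t=i,Y_{t+1}=j\}}$. For $n\ge 0$ let $\epsilon_{j,i}^{(n)}=[\mathbf{P}^{n}]_{j,i}-\pi_i$. Then for every state $i$ and states $j\neq j'$, $$\mathrm{Cov}[N_{i,j},N_{i,j'}]=\pi_i p_{i,j}p_{i,j'}\left(-W\pi_i+\sum_{t'=1}^{W-1}(W-t')\left(\epsilon_{j,i}^{(t'-1)}+\epsilon_{j',i}^{(t'-1)}\right)\right).$$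
   Context: $\mathbf{P}^{0}$ is the identity matrix; $\mathbf{1}_{\{\cdot\}}$ is the indicator function. *)

theory Defs
  imports Complex_Main "HOL-Library.FuncSet"
begin

text \<open>Finite Markov chains on the state space {0..d}. Matrices are functions
  nat => nat => real, only entries with indices in {0..d} are relevant.\<close>

fun mpow :: "nat \<Rightarrow> (nat \<Rightarrow> nat \<Rightarrow> real) \<Rightarrow> nat \<Rightarrow> nat \<Rightarrow> nat \<Rightarrow> real" where
  "mpow d P 0 = (\<lambda>i j. if i = j then 1 else 0)"
| "mpow d P (Suc n) = (\<lambda>i j. \<Sum>k\<le>d. mpow d P n i k * P k j)"

definition stochastic :: "nat \<Rightarrow> (nat \<Rightarrow> nat \<Rightarrow> real) \<Rightarrow> bool" where
  "stochastic d P \<longleftrightarrow> (\<forall>i\<le>d. \<forall>j\<le>d. 0 \<le> P i j) \<and> (\<forall>i\<le>d. (\<Sum>j\<le>d. P i j) = 1)"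

definition irreducible_chain :: "nat \<Rightarrow> (nat \<Rightarrow> nat \<Rightarrow> real) \<Rightarrow> bool" where
  "irreducible_chain d P \<longleftrightarrow> (\<forall>i\<le>d. \<forall>j\<le>d. \<exists>n. mpow d P n i j > 0)"

definition period :: "nat \<Rightarrow> (nat \<Rightarrow> nat \<Rightarrow> real) \<Rightarrow> nat \<Rightarrow> nat" where
  "period d P i = Gcd {n. n > 0 \<and> mpow d P n i i > 0}"

definition aperiodic_chain :: "nat \<Rightarrow> (nat \<Rightarrow> nat \<Rightarrow> real) \<Rightarrow> bool" where
  "aperiodic_chain d P \<longleftrightarrow> (\<forall>i\<le>d. period d P i = 1)"

text \<open>Finite state space: ergodic = irreducible and aperiodic (positive recurrence is automatic).\<close>
definition ergodic_chain :: "nat \<Rightarrow> (nat \<Rightarrow> nat \<Rightarrow> real) \<Rightarrow> bool" where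
  "ergodic_chain d P \<longleftrightarrow> stochastic d P \<and> irreducible_chain d P \<and> aperiodic_chain d P"

definition stationary :: "nat \<Rightarrow> (nat \<Rightarrow> nat \<Rightarrow> real) \<Rightarrow> (nat \<Rightarrow> real) \<Rightarrow> bool" where
  "stationary d P \<pi> \<longleftrightarrow> (\<forall>i\<le>d. 0 \<le> \<pi> i) \<and> (\<Sum>i\<le>d. \<pi> i) = 1 \<and>
     (\<forall>j\<le>d. (\<Sum>i\<le>d. \<pi> i * P i j) = \<pi> j)"

definition paths :: "nat \<Rightarrow> nat \<Rightarrow> (nat \<Rightarrow> nat) set" where
  "paths d W = PiE {1..W+1} (\<lambda>_. {0..d})"

definition path_prob :: "(nat \<Rightarrow> nat \<Rightarrow> real) \<Rightarrow> (nat \<Rightarrow> real) \<Rightarrow> nat \<Rightarrow> (nat \<Rightarrow> nat) \<Rightarrow> real" where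
  "path_prob P \<pi> W y = \<pi> (y 1) * (\<Prod>t\<in>{1..W}. P (y t) (y (t+1)))"

definition Exp :: "nat \<Rightarrow> (nat \<Rightarrow> nat \<Rightarrow> real) \<Rightarrow> (nat \<Rightarrow> real) \<Rightarrow> nat \<Rightarrow> ((nat \<Rightarrow> nat) \<Rightarrow> real) \<Rightarrow> real" where
  "Exp d P \<pi> W X = (\<Sum>y\<in>paths d W. path_prob P \<pi> W y * X y)"

definition Cov :: "nat \<Rightarrow> (nat \<Rightarrow> nat \<Rightarrow> real) \<Rightarrow> (nat \<Rightarrow> real) \<Rightarrow> nat \<Rightarrow> ((nat \<Rightarrow> nat) \<Rightarrow> real) \<Rightarrow> ((nat \<Rightarrow> nat) \<Rightarrow> real) \<Rightarrow> real" where
  "Cov d P \<pi> W X Z = Exp d P \<pi> W (\<lambda>y. X y * Z y) - Exp d P \<pi> W X * Exp d P \<pi> W Z"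

definition Ncount :: "nat \<Rightarrow> nat \<Rightarrow> nat \<Rightarrow> (nat \<Rightarrow> nat) \<Rightarrow> real" where
  "Ncount W i j y = (\<Sum>t=1..W. if y t = i \<and> y (t+1) = j then 1 else 0)"

definition eps :: "nat \<Rightarrow> (nat \<Rightarrow> nat \<Rightarrow> real) \<Rightarrow> (nat \<Rightarrow> real) \<Rightarrow> nat \<Rightarrow> nat \<Rightarrow> nat \<Rightarrow> real" where
  "eps d P \<pi> n j i = mpow d P n j i - \<pi> i"

end

theory Submission
  imports Defs
begin

text \<open>Write \<open>N(i,j) = \<Sum>\<^sub>t A\<^sub>t\<close> with \<open>A\<^sub>t = 1{Y(t) = i, Y(t+1) = j}\<close> and \<open>N(i,j') = \<Sum>\<^sub>s B\<^sub>s\<close>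
  likewise; covariance is bilinear. By stationarity \<open>E A\<^sub>t = \<pi>(i) P(i,j)\<close>, and for \<open>t < s\<close>
  the Markov property gives \<open>E[A\<^sub>t B\<^sub>s] = \<pi>(i) P(i,j) P\<^sup>s\<^sup>-\<^sup>t\<^sup>-\<^sup>1(j,i) P(i,j')\<close>, so that
  \<open>Cov[A\<^sub>t, B\<^sub>s] = \<pi>(i) P(i,j) P(i,j') \<epsilon>\<^sup>(\<^sup>s\<^sup>-\<^sup>t\<^sup>-\<^sup>1\<^sup>)(j,i)\<close>; symmetrically for \<open>s < t\<close>.
  For \<open>t = s\<close> the two events are disjoint because \<open>j \<noteq> j'\<close>, leaving
  \<open>-\<pi>(i)\<^sup>2 P(i,j) P(i,j')\<close>. A gap \<open>s - t = k\<close> occurs for \<open>W - k\<close> pairs, which yields the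
  formula. The path expectations are computed by a forward recursion that attaches a weight
  to the state at every time step.\<close>

lemma sum_PiE_insert:
  assumes "x \<notin> S"
  shows "(\<Sum>f\<in>PiE (insert x S) T. F f) = (\<Sum>y\<in>T x. \<Sum>g\<in>PiE S T. F (g(x := y)))"
proof -
  have "(\<Sum>f\<in>PiE (insert x S) T. F f) = (\<Sum>(y, g)\<in>T x \<times> PiE S T. F (g(x := y)))"
    unfolding PiE_insert_eq
    by (subst sum.reindex[OF inj_combinator[OF assms]]) (auto intro!: sum.cong)
  then show ?thesis
    by (simp add: sum.cartesian_product)
qed

lemma paths_Suc: "paths d (Suc W) = PiE (insert (Suc (Suc W)) {1..Suc W}) (\<lambda>_. {0..d})"
  unfolding paths_def by (rule arg_cong[where f = "\<lambda>S. PiE S _"]) auto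

lemma path_prob_extend:
  "path_prob P \<pi> (Suc W) (y(Suc (Suc W) := x)) = path_prob P \<pi> W y * P (y (Suc W)) x"
proof -
  have "(\<Prod>t\<in>{1..W}. P ((y(Suc (Suc W) := x)) t) ((y(Suc (Suc W) := x)) (t + 1)))
      = (\<Prod>t\<in>{1..W}. P (y t) (y (t + 1)))"
    by (rule prod.cong) auto
  then show ?thesis
    by (simp add: path_prob_def prod.cl_ivl_Suc mult.assoc)
qed

text \<open>\<open>forward d P \<pi> h n k = E[h 1 (Y(1)) \<cdots> h n (Y(n)) \<cdot> 1{Y(n+1) = k}]\<close> for the chain
  started in \<open>\<pi>\<close>, i.e. the row vector \<open>\<pi> D\<^sub>1 P D\<^sub>2 P \<cdots> D\<^sub>n P\<close> with \<open>D\<^sub>u = diag (h u)\<close>.\<close>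
fun forward :: "nat \<Rightarrow> (nat \<Rightarrow> nat \<Rightarrow> real) \<Rightarrow> (nat \<Rightarrow> real) \<Rightarrow> (nat \<Rightarrow> nat \<Rightarrow> real)
    \<Rightarrow> nat \<Rightarrow> nat \<Rightarrow> real" where
  "forward d P \<pi> h 0 k = \<pi> k"
| "forward d P \<pi> h (Suc n) k = (\<Sum>l\<le>d. forward d P \<pi> h n l * h (Suc n) l * P l k)"

lemma sum_paths_forward:
  "(\<Sum>y\<in>paths d W. path_prob P \<pi> W y * (\<Prod>u\<in>{1..W}. h u (y u)) * g (y (Suc W)))
   = (\<Sum>k\<le>d. forward d P \<pi> h W k * g k)"
proof (induction W arbitrary: g)
  case 0
  have "paths d 0 = PiE (insert 1 {}) (\<lambda>_. {0..d})"
    by (simp add: paths_def)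
  then show ?case
    by (simp add: sum_PiE_insert path_prob_def atLeast0AtMost)
next
  case (Suc W)
  have weights_extend: "(\<Prod>u\<in>{1..Suc W}. h u ((y(Suc (Suc W) := x)) u))
      = (\<Prod>u\<in>{1..W}. h u (y u)) * h (Suc W) (y (Suc W))" for y x
  proof -
    have "(\<Prod>u\<in>{1..W}. h u ((y(Suc (Suc W) := x)) u)) = (\<Prod>u\<in>{1..W}. h u (y u))"
      by (rule prod.cong) auto
    then show ?thesis
      by (simp add: prod.cl_ivl_Suc)
  qed
  have "(\<Sum>y\<in>paths d (Suc W). path_prob P \<pi> (Suc W) y * (\<Prod>u\<in>{1..Suc W}. h u (y u)) * g (y (Suc (Suc W))))
      = (\<Sum>x\<in>{0..d}. \<Sum>y\<in>paths d W. path_prob P \<pi> W y * (\<Prod>u\<in>{1..W}. h u (y u))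
          * (h (Suc W) (y (Suc W)) * P (y (Suc W)) x * g x))"
    unfolding paths_Suc
    by (subst sum_PiE_insert) (auto intro!: sum.cong simp: paths_def path_prob_extend weights_extend)
  also have "\<dots> = (\<Sum>x\<le>d. \<Sum>k\<le>d. forward d P \<pi> h W k * (h (Suc W) k * P k x * g x))"
    using Suc.IH[of "\<lambda>k. h (Suc W) k * P k _ * g _"] by (simp add: atLeast0AtMost)
  also have "\<dots> = (\<Sum>x\<le>d. forward d P \<pi> h (Suc W) x * g x)"
    by (simp add: sum_distrib_right mult.assoc)
  finally show ?case .
qed

lemma sum_forward_Suc:
  assumes "stochastic d P"
  shows "(\<Sum>k\<le>d. forward d P \<pi> h (Suc n) k) = (\<Sum>l\<le>d. forward d P \<pi> h n l * h (Suc n) l)"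
proof -
  have "(\<Sum>k\<le>d. forward d P \<pi> h (Suc n) k)
      = (\<Sum>l\<le>d. forward d P \<pi> h n l * h (Suc n) l * (\<Sum>k\<le>d. P l k))"
    by (simp add: sum_distrib_left) (rule sum.swap)
  also have "\<dots> = (\<Sum>l\<le>d. forward d P \<pi> h n l * h (Suc n) l)"
    using assms by (simp add: stochastic_def)
  finally show ?thesis .
qed

lemma sum_forward_const_one:
  assumes "stochastic d P" and "\<forall>u\<in>{n<..N}. h u = (\<lambda>_. 1)" and "n \<le> N"
  shows "(\<Sum>k\<le>d. forward d P \<pi> h N k) = (\<Sum>k\<le>d. forward d P \<pi> h n k)"
  using assms(3)
proof (induction N rule: dec_induct)
  case (step m)
  then show ?case
    using assms(2) by (simp only: sum_forward_Suc[OF assms(1)]) simp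
qed simp

lemma forward_stationary:
  assumes "stationary d P \<pi>" and "\<forall>u\<in>{1..n}. h u = (\<lambda>_. 1)" and "k \<le> d"
  shows "forward d P \<pi> h n k = \<pi> k"
  using assms(2,3)
proof (induction n arbitrary: k)
  case (Suc n)
  then have "forward d P \<pi> h (Suc n) k = (\<Sum>l\<le>d. \<pi> l * P l k)"
    by (auto intro!: sum.cong)
  with assms(1) Suc.prems(2) show ?case
    by (simp add: stationary_def)
qed simp

lemma forward_const_one:
  assumes "\<forall>u\<in>{n<..n + m}. h u = (\<lambda>_. 1)" and "k \<le> d"
  shows "forward d P \<pi> h (n + m) k = (\<Sum>l\<le>d. forward d P \<pi> h n l * mpow d P m l k)"
  using assms
proof (induction m arbitrary: k)
  case 0
  then show ?case
    by (simp add: if_distrib cong: if_cong)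
next
  case (Suc m)
  then have "forward d P \<pi> h (n + Suc m) k
      = (\<Sum>r\<le>d. (\<Sum>l\<le>d. forward d P \<pi> h n l * mpow d P m l r) * P r k)"
    by (auto intro!: sum.cong)
  also have "\<dots> = (\<Sum>l\<le>d. forward d P \<pi> h n l * (\<Sum>r\<le>d. mpow d P m l r * P r k))"
    by (simp add: sum_distrib_left sum_distrib_right mult.assoc) (rule sum.swap)
  finally show ?case
    by simp
qed

lemma forward_Suc_pinned:
  assumes "\<And>l. h (Suc n) l = w l * of_bool (l = c)" and "c \<le> d"
  shows "forward d P \<pi> h (Suc n) k = forward d P \<pi> h n c * w c * P c k"
proof -
  have "forward d P \<pi> h (Suc n) k = (\<Sum>l\<le>d. if l = c then forward d P \<pi> h n l * w l * P l k else 0)"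
    unfolding forward.simps assms(1) by (intro sum.cong refl) (simp add: of_bool_def)
  with assms(2) show ?thesis
    by simp
qed

lemma mpow_Suc_left:
  assumes "i \<le> d" and "j \<le> d"
  shows "mpow d P (Suc n) i j = (\<Sum>k\<le>d. P i k * mpow d P n k j)"
  using assms(2)
proof (induction n arbitrary: j)
  case 0
  with assms(1) show ?case
    by (simp add: if_distrib[of "\<lambda>x. x * _"] if_distrib[of "\<lambda>x. _ * x"] cong: if_cong)
next
  case (Suc n)
  have "mpow d P (Suc (Suc n)) i j = (\<Sum>r\<le>d. mpow d P (Suc n) i r * P r j)"
    by (simp only: mpow.simps)
  also have "\<dots> = (\<Sum>r\<le>d. \<Sum>k\<le>d. P i k * mpow d P n k r * P r j)"
    using Suc.IH by (auto intro!: sum.cong simp: sum_distrib_right simp del: mpow.simps)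
  also have "\<dots> = (\<Sum>k\<le>d. P i k * mpow d P (Suc n) k j)"
    by (subst sum.swap) (simp add: sum_distrib_left mult.assoc)
  finally show ?case .
qed

lemma Exp_prod_weights:
  assumes "stochastic d P" and "n \<le> W" and "\<forall>u\<in>{Suc n<..Suc W}. h u = (\<lambda>_. 1)"
  shows "Exp d P \<pi> W (\<lambda>y. \<Prod>u\<in>{1..Suc W}. h u (y u))
    = (\<Sum>l\<le>d. forward d P \<pi> h n l * h (Suc n) l)"
proof -
  have "Exp d P \<pi> W (\<lambda>y. \<Prod>u\<in>{1..Suc W}. h u (y u))
      = (\<Sum>k\<le>d. forward d P \<pi> h W k * h (Suc W) k)"
    using sum_paths_forward[where h = h and g = "h (Suc W)"]
    by (simp add: Exp_def prod.cl_ivl_Suc mult.assoc)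
  also have "\<dots> = (\<Sum>k\<le>d. forward d P \<pi> h (Suc W) k)"
    by (rule sum_forward_Suc[OF assms(1), symmetric])
  also have "\<dots> = (\<Sum>k\<le>d. forward d P \<pi> h (Suc n) k)"
    using assms by (intro sum_forward_const_one) auto
  also have "\<dots> = (\<Sum>l\<le>d. forward d P \<pi> h n l * h (Suc n) l)"
    by (rule sum_forward_Suc[OF assms(1)])
  finally show ?thesis .
qed

definition pin_weight :: "nat \<Rightarrow> nat \<Rightarrow> nat \<Rightarrow> nat \<Rightarrow> real" where
  "pin_weight t a u k = (if u = t then of_bool (k = a) else 1)"

definition transition_indicator :: "nat \<Rightarrow> nat \<Rightarrow> nat \<Rightarrow> (nat \<Rightarrow> nat) \<Rightarrow> real" where
  "transition_indicator t a b y = of_bool (y t = a \<and> y (Suc t) = b)"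

lemma Ncount_eq_sum_transition_indicator:
  "Ncount W a b = (\<lambda>y. \<Sum>t=1..W. transition_indicator t a b y)"
  unfolding Ncount_def transition_indicator_def of_bool_def by simp

lemma prod_pin_weight:
  assumes "finite S" and "t \<in> S"
  shows "(\<Prod>u\<in>S. pin_weight t a u (y u)) = of_bool (y t = a)"
  using assms by (simp add: pin_weight_def)

lemma forward_pinned_start:
  assumes "stationary d P \<pi>" and "a \<le> d" and "1 \<le> t"
    and "\<forall>u\<in>{1..<t}. h u = (\<lambda>_. 1)" and "h t = (\<lambda>l. of_bool (l = a))"
  shows "forward d P \<pi> h t k = \<pi> a * P a k"
proof -
  obtain n where t: "t = Suc n"
    using assms(3) by (cases t) auto
  have "forward d P \<pi> h n a = \<pi> a"
    using assms t by (intro forward_stationary) auto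
  then show ?thesis
    using assms(2,5) t by (subst t, subst forward_Suc_pinned[where w = "\<lambda>_. 1"]) auto
qed

lemma Exp_transition_indicator:
  assumes "stochastic d P" and "stationary d P \<pi>" and "a \<le> d" and "b \<le> d" and "t \<in> {1..W}"
  shows "Exp d P \<pi> W (transition_indicator t a b) = \<pi> a * P a b"
proof -
  define h where "h u k = pin_weight t a u k * pin_weight (Suc t) b u k" for u k
  have "Exp d P \<pi> W (transition_indicator t a b) = (\<Sum>l\<le>d. forward d P \<pi> h t l * h (Suc t) l)"
  proof -
    have "transition_indicator t a b = (\<lambda>y. \<Prod>u\<in>{1..Suc W}. h u (y u))"
      using assms(5) unfolding h_def prod.distrib
      by (subst (1 2) prod_pin_weight) (auto simp: transition_indicator_def)
    then show ?thesis
      using assms by (simp only:) (intro Exp_prod_weights, auto simp: h_def pin_weight_def)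
  qed
  also have "\<dots> = forward d P \<pi> h t b"
    using assms(4) by (simp add: h_def pin_weight_def)
  also have "\<dots> = \<pi> a * P a b"
    using assms by (intro forward_pinned_start) (auto simp: h_def pin_weight_def)
  finally show ?thesis .
qed

lemma Exp_transition_indicator_pair:
  assumes "stochastic d P" and "stationary d P \<pi>"
    and "a \<le> d" and "b \<le> d" and "c \<le> d" and "e \<le> d"
    and "1 \<le> t" and "t < s" and "s \<le> W"
  shows "Exp d P \<pi> W (\<lambda>y. transition_indicator t a b y * transition_indicator s c e y)
    = \<pi> a * P a b * mpow d P (s - t - 1) b c * P c e"
proof -
  define h where "h u k = pin_weight t a u k * pin_weight (Suc t) b u k
    * (pin_weight s c u k * pin_weight (Suc s) e u k)" for u k
  have start: "forward d P \<pi> h t k = \<pi> a * P a k" for k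
    using assms by (intro forward_pinned_start) (auto simp: h_def pin_weight_def)
  have "Exp d P \<pi> W (\<lambda>y. transition_indicator t a b y * transition_indicator s c e y)
      = (\<Sum>l\<le>d. forward d P \<pi> h s l * h (Suc s) l)"
  proof -
    have "(\<lambda>y. transition_indicator t a b y * transition_indicator s c e y)
        = (\<lambda>y. \<Prod>u\<in>{1..Suc W}. h u (y u))"
      using assms unfolding h_def prod.distrib
      by (subst (1 2 3 4) prod_pin_weight) (auto simp: transition_indicator_def)
    then show ?thesis
      using assms by (simp only:) (intro Exp_prod_weights, auto simp: h_def pin_weight_def)
  qed
  also have "\<dots> = forward d P \<pi> h s e"
    using assms by (simp add: h_def pin_weight_def)
  also have "\<dots> = \<pi> a * P a b * mpow d P (s - t - 1) b c * P c e"
  proof (cases "s = Suc t")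
    case True
    have "forward d P \<pi> h s e = forward d P \<pi> h t c * of_bool (c = b) * P c e"
      unfolding True using assms True by (intro forward_Suc_pinned) (auto simp: h_def pin_weight_def)
    then show ?thesis
      using True by (auto simp: start)
  next
    case False
    define m where "m = s - Suc (Suc t)"
    have s: "s = Suc (Suc t + m)"
      using False assms(8) by (simp add: m_def)
    have "forward d P \<pi> h (Suc t) l = \<pi> a * P a b * P b l" for l
      using assms False by (subst forward_Suc_pinned[where w = "\<lambda>_. 1" and c = b]) (auto simp: h_def pin_weight_def start)
    then have "forward d P \<pi> h (Suc t + m) c = \<pi> a * P a b * (\<Sum>l\<le>d. P b l * mpow d P m l c)"
      using assms s by (subst forward_const_one) (auto simp: h_def pin_weight_def sum_distrib_left mult.assoc)
    also have "\<dots> = \<pi> a * P a b * mpow d P (s - t - 1) b c"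
      using assms s by (simp add: mpow_Suc_left del: mpow.simps)
    finally show ?thesis
      using assms s by (subst s, subst forward_Suc_pinned[where w = "\<lambda>_. 1" and c = c])
        (auto simp: h_def pin_weight_def)
  qed
  finally show ?thesis .
qed

lemma Exp_sum: "Exp d P \<pi> W (\<lambda>y. \<Sum>t\<in>T. X t y) = (\<Sum>t\<in>T. Exp d P \<pi> W (X t))"
  unfolding Exp_def by (simp add: sum_distrib_left) (rule sum.swap)

lemma Cov_sum_sum:
  "Cov d P \<pi> W (\<lambda>y. \<Sum>t\<in>T. X t y) (\<lambda>y. \<Sum>s\<in>S. Z s y)
    = (\<Sum>t\<in>T. \<Sum>s\<in>S. Cov d P \<pi> W (X t) (Z s))"
  unfolding Cov_def sum_product Exp_sum by (simp add: sum_subtractf)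

lemma Cov_transition_indicator_pair:
  assumes "stochastic d P" and "stationary d P \<pi>"
    and "i \<le> d" and "j \<le> d" and "j' \<le> d" and "j \<noteq> j'"
    and "t \<in> {1..W}" and "s \<in> {1..W}"
  shows "Cov d P \<pi> W (transition_indicator t i j) (transition_indicator s i j')
    = \<pi> i * P i j * P i j' * ((if t < s then eps d P \<pi> (s - t - 1) j i else 0)
        + (if s < t then eps d P \<pi> (t - s - 1) j' i else 0) - (if t = s then \<pi> i else 0))"
proof -
  have Exp_product: "Exp d P \<pi> W (transition_indicator t i j) * Exp d P \<pi> W (transition_indicator s i j')
      = \<pi> i * P i j * P i j' * \<pi> i"
    using assms by (simp add: Exp_transition_indicator)
  consider (before) "t < s" | (after) "s < t" | (same) "t = s"
    by linarith
  then show ?thesis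
  proof cases
    case before
    then have "Exp d P \<pi> W (\<lambda>y. transition_indicator t i j y * transition_indicator s i j' y)
        = \<pi> i * P i j * mpow d P (s - t - 1) j i * P i j'"
      using assms by (intro Exp_transition_indicator_pair) auto
    with before show ?thesis
      unfolding Cov_def Exp_product by (simp add: eps_def algebra_simps)
  next
    case after
    then have "Exp d P \<pi> W (\<lambda>y. transition_indicator t i j y * transition_indicator s i j' y)
        = \<pi> i * P i j' * mpow d P (t - s - 1) j' i * P i j"
      using assms Exp_transition_indicator_pair[of d P \<pi> i j' i j s t W]
      by (simp add: mult.commute[of "transition_indicator t i j _"])
    with after show ?thesis
      unfolding Cov_def Exp_product by (simp add: eps_def algebra_simps)
  next
    case same
    then have "Exp d P \<pi> W (\<lambda>y. transition_indicator t i j y * transition_indicator s i j' y) = 0"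
      using assms(6) by (auto simp: Exp_def transition_indicator_def intro!: sum.neutral)
    with same show ?thesis
      unfolding Cov_def Exp_product by simp
  qed
qed

lemma sum_upper_triangle_by_gap:
  fixes f :: "nat \<Rightarrow> real"
  shows "(\<Sum>t=1..W. \<Sum>s=1..W. if t < s then f (s - t - 1) else 0)
    = (\<Sum>k=1..W-1. real (W - k) * f (k - 1))"
proof (induction W)
  case (Suc W)
  have last_column: "(\<Sum>t=1..W. f (W - t)) = (\<Sum>k=1..W. f (k - 1))"
    by (subst sum.atLeastAtMost_rev) (auto intro!: sum.cong)
  have drop_last: "(\<Sum>k=1..W-1. real (W - k) * f (k - 1)) = (\<Sum>k=1..W. real (W - k) * f (k - 1))"
    by (cases W) (simp_all add: sum.cl_ivl_Suc)
  have "(\<Sum>t=1..Suc W. \<Sum>s=1..Suc W. if t < s then f (s - t - 1) else 0)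
      = (\<Sum>t=1..W. \<Sum>s=1..W. if t < s then f (s - t - 1) else 0) + (\<Sum>t=1..W. f (W - t))"
    by (simp add: sum.cl_ivl_Suc sum.distrib)
  also have "\<dots> = (\<Sum>k=1..W. real (W - k) * f (k - 1) + f (k - 1))"
    unfolding Suc.IH last_column drop_last by (rule sum.distrib[symmetric])
  also have "\<dots> = (\<Sum>k=1..W. real (Suc W - k) * f (k - 1))"
    by (intro sum.cong) (auto simp: of_nat_diff Suc_diff_le algebra_simps)
  finally show ?case
    by simp
qed simp

theorem mainTheorem2:
  fixes d W :: nat and P :: "nat \<Rightarrow> nat \<Rightarrow> real" and \<pi> :: "nat \<Rightarrow> real"
    and i j j' :: nat
  assumes "ergodic_chain d P" and "stationary d P \<pi>"
    and "i \<le> d" and "j \<le> d" and "j' \<le> d" and "j \<noteq> j'"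
  shows "Cov d P \<pi> W (Ncount W i j) (Ncount W i j') =
    \<pi> i * P i j * P i j' *
      (- real W * \<pi> i + (\<Sum>t'=1..W-1. real (W - t') *
          (eps d P \<pi> (t'-1) j i + eps d P \<pi> (t'-1) j' i)))"
proof -
  have lower_triangle: "(\<Sum>t=1..W. \<Sum>s=1..W. if s < t then f (t - s - 1) else 0)
      = (\<Sum>k=1..W-1. real (W - k) * f (k - 1))" for f :: "nat \<Rightarrow> real"
    by (subst sum.swap) (rule sum_upper_triangle_by_gap)
  have "stochastic d P"
    using assms(1) by (simp add: ergodic_chain_def)
  then have "Cov d P \<pi> W (Ncount W i j) (Ncount W i j')
      = (\<Sum>t=1..W. \<Sum>s=1..W. \<pi> i * P i j * P i j' *
          ((if t < s then eps d P \<pi> (s - t - 1) j i else 0)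
            + (if s < t then eps d P \<pi> (t - s - 1) j' i else 0) - (if t = s then \<pi> i else 0)))"
    unfolding Ncount_eq_sum_transition_indicator Cov_sum_sum
    using assms by (intro sum.cong refl Cov_transition_indicator_pair) auto
  also have "\<dots> = \<pi> i * P i j * P i j' *
      ((\<Sum>t=1..W. \<Sum>s=1..W. if t < s then eps d P \<pi> (s - t - 1) j i else 0)
        + (\<Sum>t=1..W. \<Sum>s=1..W. if s < t then eps d P \<pi> (t - s - 1) j' i else 0) - real W * \<pi> i)"
    unfolding sum_distrib_left[symmetric] by (simp add: sum.distrib sum_subtractf)
  also have "\<dots> = \<pi> i * P i j * P i j' *
      (- real W * \<pi> i + (\<Sum>t'=1..W-1. real (W - t') *
          (eps d P \<pi> (t'-1) j i + eps d P \<pi> (t'-1) j' i)))"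
    unfolding sum_upper_triangle_by_gap[of "\<lambda>n. eps d P \<pi> n j i"]
      lower_triangle[of "\<lambda>n. eps d P \<pi> n j' i"]
    by (simp add: sum.distrib algebra_simps)
  finally show ?thesis .
qed

end
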